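(* Let $H$ be a complex separable Hilbert space and let $S,T\in B(H)$ be positive normal operators with Cartesian decompositions $S=A+iC$ and $T=B+iD$, where $A,B,C,D$ are self-adjoint. Suppose there are real numbers $a_1,a_2,b_1,b_2,c_1,c_2,d_1,d_2$ such that $a_1\le A\le a_2$, $b_1\le B\le b_2$, $c_1\le C\le c_2$ and $d_1\le D\le d_2$. Then $$\|ST-TS\|\le \frac12\sqrt{(a_2-a_1)^2+(c_2-c_1)^2}\,\sqrt{(b_2-b_1)^2+(d_2-d_1)^2}.$$
   Context: $B(H)$ denotes the algebra of bounded linear operators on $H$ with the operator norm. The Cartesian decomposition of $S\in B(H)$ is $S=A+iC$ with $A=\frac{S+S^*}{2}$ and $C=\frac{S-S^*}{2i}$ self-adjoint. For a self-adjoint operator $A$ and real $\alpha$, $\alpha\le A$ means $A-\alpha I$ is positive, and $A\le\alpha$ means $\alpha I-A$ is positive. *)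

theory Defs
  imports "HOL-Analysis.Analysis" "HOL-Library.Complex_Order"
begin

text \<open>A complex Hilbert space is modelled as a real Hilbert space (type class
  real_inner + complete_space) together with a complex structure J, i.e. the
  operator of multiplication by the imaginary unit: a real-linear isometry with J(J x) = -x.\<close>

definition complex_structure :: "('h::real_inner \<Rightarrow>\<^sub>L 'h) \<Rightarrow> bool" where
  "complex_structure J \<longleftrightarrow> (\<forall>x. J (J x) = - x) \<and> (\<forall>x y. inner (J x) (J y) = inner x y)"

definition cscaleV :: "('h::real_inner \<Rightarrow>\<^sub>L 'h) \<Rightarrow> complex \<Rightarrow> 'h \<Rightarrow> 'h" where
  "cscaleV J c x = Re c *\<^sub>R x + Im c *\<^sub>R J x"

text \<open>Complex inner product (conjugate-linear in the first, linear in the second argument).\<close>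
definition cinner :: "('h::real_inner \<Rightarrow>\<^sub>L 'h) \<Rightarrow> 'h \<Rightarrow> 'h \<Rightarrow> complex" where
  "cinner J x y = Complex (inner x y) (- inner x (J y))"

text \<open>Elements of B(H): bounded real-linear maps commuting with J (= complex-linear).\<close>
definition complex_bounded_op :: "('h::real_inner \<Rightarrow>\<^sub>L 'h) \<Rightarrow> ('h \<Rightarrow>\<^sub>L 'h) \<Rightarrow> bool" where
  "complex_bounded_op J X \<longleftrightarrow> (\<forall>x. X (J x) = J (X x))"

definition cscaleL :: "('h::real_inner \<Rightarrow>\<^sub>L 'h) \<Rightarrow> complex \<Rightarrow> ('h \<Rightarrow>\<^sub>L 'h) \<Rightarrow> ('h \<Rightarrow>\<^sub>L 'h)" where
  "cscaleL J c X = Re c *\<^sub>R X + Im c *\<^sub>R (J o\<^sub>L X)"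

definition is_adjoint :: "('h::real_inner \<Rightarrow>\<^sub>L 'h) \<Rightarrow> ('h \<Rightarrow>\<^sub>L 'h) \<Rightarrow> ('h \<Rightarrow>\<^sub>L 'h) \<Rightarrow> bool" where
  "is_adjoint J X Y \<longleftrightarrow> (\<forall>x y. cinner J (X x) y = cinner J x (Y y))"

definition self_adjoint_op :: "('h::real_inner \<Rightarrow>\<^sub>L 'h) \<Rightarrow> ('h \<Rightarrow>\<^sub>L 'h) \<Rightarrow> bool" where
  "self_adjoint_op J X \<longleftrightarrow> is_adjoint J X X"

text \<open>Positive operator: 0 \<le> <x, X x> for all x (complex order: real and nonnegative).\<close>
definition positive_op :: "('h::real_inner \<Rightarrow>\<^sub>L 'h) \<Rightarrow> ('h \<Rightarrow>\<^sub>L 'h) \<Rightarrow> bool" where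
  "positive_op J X \<longleftrightarrow> (\<forall>x. 0 \<le> cinner J x (X x))"

definition normal_op :: "('h::real_normed_vector \<Rightarrow>\<^sub>L 'h) \<Rightarrow> ('h \<Rightarrow>\<^sub>L 'h) \<Rightarrow> bool" where
  "normal_op X Xs \<longleftrightarrow> X o\<^sub>L Xs = Xs o\<^sub>L X"

end

theory Submission
  imports Defs
begin

text \<open>A positive operator on a complex space is self-adjoint, so C = D = 0 and A = S, B = T.
  If a1 \<le> S \<le> a2, the shifted operator S - (a1+a2)/2 is symmetric with numerical range in
  [-(a2-a1)/2, (a2-a1)/2], hence of norm at most (a2-a1)/2, and likewise for T. The commutator
  is unchanged by these shifts, so ST - TS is bounded by twice the product of the two norms.\<close>

lemma positive_op_inner_symmetric:
  assumes J: "complex_structure J" and op: "complex_bounded_op J S" and pos: "positive_op J S"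
  shows "inner x (S y) = inner (S x) y"
proof -
  \<comment> \<open>Positivity forces the imaginary part -inner u (J (S u)) to vanish; polarize and use J.\<close>
  have im0: "inner u (J (S u)) = 0" for u
    using pos unfolding positive_op_def cinner_def less_eq_complex_def by force
  have polar: "inner u (J (S v)) + inner v (J (S u)) = 0" for u v
    using im0[of "u + v"] im0[of u] im0[of v]
    by (simp add: blinfun.add_right inner_add_left inner_add_right)
  have "inner (J x) (J (S y)) = inner x (S y)"
    using J by (simp add: complex_structure_def)
  moreover have "J (S (J x)) = - S x"
    using op J by (simp add: complex_bounded_op_def complex_structure_def)
  ultimately show ?thesis
    using polar[of "J x" y] by (simp add: inner_commute)
qed

lemma positive_op_adjoint_eq:
  assumes J: "complex_structure J" and op: "complex_bounded_op J S" and pos: "positive_op J S"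
    and adj: "is_adjoint J S Ss"
  shows "Ss = S"
proof (rule blinfun_eqI)
  fix y
  have "inner x (Ss y) = inner x (S y)" for x
  proof -
    have "inner (S x) y = inner x (Ss y)"
      using adj unfolding is_adjoint_def cinner_def by (metis complex.inject)
    then show ?thesis using positive_op_inner_symmetric[OF J op pos] by simp
  qed
  then have "inner (Ss y - S y) (Ss y - S y) = 0" by (simp add: inner_diff)
  then show "Ss y = S y" by simp
qed

lemma positive_op_lower_bound:
  assumes "positive_op J (A - a *\<^sub>R id_blinfun)"
  shows "a * inner x x \<le> inner x (A x)"
proof -
  have "0 \<le> Re (cinner J x ((A - a *\<^sub>R id_blinfun) x))"
    using assms unfolding positive_op_def less_eq_complex_def by auto
  then show ?thesis by (simp add: cinner_def blinfun.diff_left blinfun.scaleR_left inner_diff_right)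
qed

lemma positive_op_upper_bound:
  assumes "positive_op J (a *\<^sub>R id_blinfun - A)"
  shows "inner x (A x) \<le> a * inner x x"
proof -
  have "0 \<le> Re (cinner J x ((a *\<^sub>R id_blinfun - A) x))"
    using assms unfolding positive_op_def less_eq_complex_def by auto
  then show ?thesis by (simp add: cinner_def blinfun.diff_left blinfun.scaleR_left inner_diff_right)
qed

lemma norm_symmetric_le_of_quadratic_form_bound:
  fixes M :: "'a::real_inner \<Rightarrow>\<^sub>L 'a"
  assumes sym: "\<And>x y. inner x (M y) = inner (M x) y"
    and bound: "\<And>x. \<bar>inner x (M x)\<bar> \<le> r * (norm x)\<^sup>2"
  shows "norm (M x) \<le> r * norm x"
proof (cases "M x = 0")
  case True
  have "0 \<le> r * (norm x)\<^sup>2" using bound[of x] by linarith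
  then show ?thesis using True by (cases "x = 0") (auto simp: zero_le_mult_iff)
next
  case False
  \<comment> \<open>Polarization with y the vector M x rescaled to the length of x.\<close>
  define y where "y = (norm x / norm (M x)) *\<^sub>R M x"
  have norm_y: "norm y = norm x" using False by (simp add: y_def)
  have "inner (M x) y = norm x * norm (M x)"
    using False by (simp add: y_def power2_norm_eq_inner[symmetric] power2_eq_square)
  moreover have "inner (x + y) (M (x + y)) - inner (x - y) (M (x - y)) = 4 * inner (M x) y"
    using sym[of y x] sym[of x y]
    by (simp add: blinfun.add_right blinfun.diff_right inner_add inner_diff inner_commute)
  moreover have "r * (norm (x + y))\<^sup>2 + r * (norm (x - y))\<^sup>2 = 2 * r * ((norm x)\<^sup>2 + (norm y)\<^sup>2)"
    by (simp add: power2_norm_eq_inner inner_add inner_diff inner_commute algebra_simps)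
  ultimately have "norm x * norm (M x) \<le> norm x * (r * norm x)"
    using bound[of "x + y"] bound[of "x - y"] norm_y by (simp add: power2_eq_square algebra_simps)
  then show ?thesis
    using False by (cases "x = 0") auto
qed

lemma norm_minus_midpoint_le:
  fixes S :: "'a::real_inner \<Rightarrow>\<^sub>L 'a"
  assumes sym: "\<And>x y. inner x (S y) = inner (S x) y"
    and lower: "\<And>x. a1 * inner x x \<le> inner x (S x)"
    and upper: "\<And>x. inner x (S x) \<le> a2 * inner x x"
  shows "norm (S - ((a1 + a2) / 2) *\<^sub>R id_blinfun) \<le> \<bar>a2 - a1\<bar> / 2"
proof (rule norm_blinfun_bound)
  let ?M = "S - ((a1 + a2) / 2) *\<^sub>R id_blinfun"
  show "0 \<le> \<bar>a2 - a1\<bar> / 2" by simp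
  fix x
  have "\<bar>inner x (?M x)\<bar> \<le> \<bar>a2 - a1\<bar> / 2 * (norm x)\<^sup>2" for x
  proof -
    have "\<bar>inner x (S x) - (a1 + a2) / 2 * inner x x\<bar> \<le> (a2 - a1) / 2 * inner x x"
      using lower[of x] upper[of x] unfolding abs_le_iff by (simp add: field_simps)
    also have "\<dots> \<le> \<bar>a2 - a1\<bar> / 2 * inner x x"
      by (simp add: mult_right_mono)
    finally show ?thesis
      by (simp add: blinfun.diff_left blinfun.scaleR_left inner_diff_right power2_norm_eq_inner)
  qed
  moreover have "inner x (?M y) = inner (?M x) y" for x y
    using sym[of x y] by (simp add: blinfun.diff_left blinfun.scaleR_left inner_diff inner_commute)
  ultimately show "norm (?M x) \<le> \<bar>a2 - a1\<bar> / 2 * norm x"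
    using norm_symmetric_le_of_quadratic_form_bound by blast
qed

lemma norm_commutator_le_shifted:
  fixes X Y :: "'a::real_normed_vector \<Rightarrow>\<^sub>L 'a"
  shows "norm ((X o\<^sub>L Y) - (Y o\<^sub>L X))
    \<le> 2 * norm (X - \<alpha> *\<^sub>R id_blinfun) * norm (Y - \<beta> *\<^sub>R id_blinfun)"
proof -
  let ?M = "X - \<alpha> *\<^sub>R id_blinfun" and ?N = "Y - \<beta> *\<^sub>R id_blinfun"
  have "(X o\<^sub>L Y) - (Y o\<^sub>L X) = (?M o\<^sub>L ?N) - (?N o\<^sub>L ?M)"
    by (rule blinfun_eqI) (simp add: blinfun.diff_left blinfun.diff_right blinfun.scaleR_left blinfun.scaleR_right algebra_simps)
  also have "norm \<dots> \<le> norm ?M * norm ?N + norm ?N * norm ?M"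
    by (rule order.trans[OF norm_triangle_ineq4 add_mono[OF norm_blinfun_compose norm_blinfun_compose]])
  finally show ?thesis by simp
qed

theorem mainTheorem1:
  fixes J :: "'h::{real_inner, complete_space, second_countable_topology} \<Rightarrow>\<^sub>L 'h"
    and S T Ss Ts A B C D :: "'h \<Rightarrow>\<^sub>L 'h"
    and a1 a2 b1 b2 c1 c2 d1 d2 :: real
  assumes J: "complex_structure J"
    and S_op: "complex_bounded_op J S" and T_op: "complex_bounded_op J T"
    and Ss_op: "complex_bounded_op J Ss" and Ts_op: "complex_bounded_op J Ts"
    and Ss_adj: "is_adjoint J S Ss" and Ts_adj: "is_adjoint J T Ts"
    and S_pos: "positive_op J S" and T_pos: "positive_op J T"
    and S_normal: "normal_op S Ss" and T_normal: "normal_op T Ts"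
    and A_def: "A = cscaleL J (1/2) (S + Ss)"
    and C_def: "C = cscaleL J (1/(2*\<i>)) (S - Ss)"
    and B_def: "B = cscaleL J (1/2) (T + Ts)"
    and D_def: "D = cscaleL J (1/(2*\<i>)) (T - Ts)"
    and A1: "positive_op J (A - a1 *\<^sub>R id_blinfun)" and A2: "positive_op J (a2 *\<^sub>R id_blinfun - A)"
    and B1: "positive_op J (B - b1 *\<^sub>R id_blinfun)" and B2: "positive_op J (b2 *\<^sub>R id_blinfun - B)"
    and C1: "positive_op J (C - c1 *\<^sub>R id_blinfun)" and C2: "positive_op J (c2 *\<^sub>R id_blinfun - C)"
    and D1: "positive_op J (D - d1 *\<^sub>R id_blinfun)" and D2: "positive_op J (d2 *\<^sub>R id_blinfun - D)"
  shows "norm ((S o\<^sub>L T) - (T o\<^sub>L S))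
    \<le> 1/2 * sqrt ((a2 - a1)^2 + (c2 - c1)^2) * sqrt ((b2 - b1)^2 + (d2 - d1)^2)"
proof -
  have "A = S"
    unfolding A_def positive_op_adjoint_eq[OF J S_op S_pos Ss_adj] cscaleL_def by (simp add: scaleR_2)
  then have S_mid: "norm (S - ((a1 + a2) / 2) *\<^sub>R id_blinfun) \<le> \<bar>a2 - a1\<bar> / 2"
    using positive_op_inner_symmetric[OF J S_op S_pos] positive_op_lower_bound[OF A1]
      positive_op_upper_bound[OF A2] by (intro norm_minus_midpoint_le) auto
  have "B = T"
    unfolding B_def positive_op_adjoint_eq[OF J T_op T_pos Ts_adj] cscaleL_def by (simp add: scaleR_2)
  then have T_mid: "norm (T - ((b1 + b2) / 2) *\<^sub>R id_blinfun) \<le> \<bar>b2 - b1\<bar> / 2"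
    using positive_op_inner_symmetric[OF J T_op T_pos] positive_op_lower_bound[OF B1]
      positive_op_upper_bound[OF B2] by (intro norm_minus_midpoint_le) auto
  have "norm ((S o\<^sub>L T) - (T o\<^sub>L S)) \<le> 2 * (\<bar>a2 - a1\<bar> / 2) * (\<bar>b2 - b1\<bar> / 2)"
    using norm_commutator_le_shifted[of S T "(a1 + a2) / 2" "(b1 + b2) / 2"]
      mult_mono[OF S_mid T_mid] by simp
  also have "\<dots> \<le> 1/2 * sqrt ((a2 - a1)^2 + (c2 - c1)^2) * sqrt ((b2 - b1)^2 + (d2 - d1)^2)"
    using mult_mono[OF real_sqrt_le_mono real_sqrt_le_mono, of "(a2 - a1)^2" _ "(b2 - b1)^2"]
    by simp
  finally show ?thesis .
qed

end
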